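(* Let $A$ be a clustering of $\{1,\dots,n\}$ with $1<k_A<n$, let $s$ be a cluster-size specification of $n$ elements, and let $B\sim\mathcal C(s)$. Then $$\mathbf E[\mathrm{CD}(A,B)]-\tfrac12=-\frac1\pi\sum_{k=1}^\infty\frac{(2k)!}{2^{2k}(k!)^2}\,\frac{\mathbf E[\mathrm{CC}(A,B)^{2k+1}]}{2k+1}.$$
   Context: A clustering of $\{1,\dots,n\}$ is a partition $A=\{A_1,\dots,A_{k_A}\}$ into nonempty clusters. Let $N=\binom n2$. For a clustering $A$, let $\vec A\in\{0,1\}^N$ be indexed by unordered pairs of distinct elements, with entry $1$ iff the pair lies in one cluster of $A$; let $m_A$ be the number of such pairs and $\mathbf 1$ the all-ones vector. Define $\vec u(A)=\frac1{\sqrt N}\mathbf 1$ if $k_A=1$, $\vec u(A)=(\vec A-\frac{m_A}N\mathbf 1)/\|\vec A-\frac{m_A}N\mathbf 1\|$ if $1<k_A<n$, $\vec u(A)=-\frac1{\sqrt N}\mathbf 1$ if $k_A=n$. Then $\mathrm{CC}(A,B)=\langle\vec u(A),\vec u(B)\rangle$ (the Pearson correlation of $\vec A,\vec B$ when both clusterings are nontrivial) and $\mathrm{CD}(A,B)=\frac1\pi\arccos\mathrm{CC}(A,B)$. For a multiset $s$ of positive integers summing to $n$, $\mathcal C(s)$ is the uniform distribution over clusterings with cluster sizes $s$. *)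

theory Defs
  imports "HOL-Probability.Probability" "HOL-Library.Disjoint_Sets" "HOL-Library.Multiset"
begin

definition clustering :: "nat \<Rightarrow> nat set set \<Rightarrow> bool" where
  "clustering n A \<longleftrightarrow> partition_on {1..n} A"

definition upairs :: "nat \<Rightarrow> nat set set" where
  "upairs n = {p. \<exists>i j. i \<in> {1..n} \<and> j \<in> {1..n} \<and> i \<noteq> j \<and> p = {i, j}}"

definition NN :: "nat \<Rightarrow> real" where
  "NN n = real (card (upairs n))"

definition cvec :: "nat set set \<Rightarrow> nat set \<Rightarrow> real" where
  "cvec A p = (if \<exists>C\<in>A. p \<subseteq> C then 1 else 0)"

definition mA :: "nat \<Rightarrow> nat set set \<Rightarrow> real" where
  "mA n A = (\<Sum>p\<in>upairs n. cvec A p)"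

definition uvec :: "nat \<Rightarrow> nat set set \<Rightarrow> nat set \<Rightarrow> real" where
  "uvec n A p =
     (if card A = 1 then 1 / sqrt (NN n)
      else if card A = n then - 1 / sqrt (NN n)
      else (cvec A p - mA n A / NN n) /
           sqrt (\<Sum>q\<in>upairs n. (cvec A q - mA n A / NN n)^2))"

definition CC :: "nat \<Rightarrow> nat set set \<Rightarrow> nat set set \<Rightarrow> real" where
  "CC n A B = (\<Sum>p\<in>upairs n. uvec n A p * uvec n B p)"

definition CD :: "nat \<Rightarrow> nat set set \<Rightarrow> nat set set \<Rightarrow> real" where
  "CD n A B = arccos (CC n A B) / pi"

definition clusterings_sizes :: "nat \<Rightarrow> nat multiset \<Rightarrow> nat set set set" where
  "clusterings_sizes n s = {B. clustering n B \<and> image_mset card (mset_set B) = s}"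

definition Cdist :: "nat \<Rightarrow> nat multiset \<Rightarrow> nat set set pmf" where
  "Cdist n s = pmf_of_set (clusterings_sizes n s)"

end

theory Submission
  imports Defs
begin

text \<open>Since \<open>arccos x = \<pi>/2 - arcsin x\<close>, we have \<open>\<E>[CD(A,B)] - 1/2 = -\<E>[arcsin CC(A,B)]/\<pi>\<close>.
  The Taylor series \<open>arcsin x = \<Sum>\<^sub>k a\<^sub>k x\<^sup>2\<^sup>k\<^sup>+\<^sup>1/(2k+1)\<close> with
  \<open>a\<^sub>k = (2k)!/(4\<^sup>k (k!)\<^sup>2)\<close> converges on all of \<open>[-1,1]\<close>, because
  \<open>a\<^sub>k \<le> (k+1)\<^sup>-\<^sup>1\<^sup>/\<^sup>2\<close>, and \<open>|CC| \<le> 1\<close> by Cauchy-Schwarz; the expectation over the finite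
  set of clusterings with sizes \<open>s\<close> therefore commutes with the series. It remains to see that the
  \<open>k = 0\<close> term \<open>\<E>[CC(A,B)] = \<langle>u(A), \<E>[u(B)]\<rangle>\<close> vanishes: the law of \<open>B\<close> is invariant under
  permutations of \<open>{1..n}\<close>, which act transitively on pairs, so \<open>\<E>[u(B)]\<close> is a constant vector,
  while \<open>u(A)\<close> is centred.\<close>

section \<open>The arcsine series on the closed interval\<close>

definition arcsin_coeff :: "nat \<Rightarrow> real" where
  "arcsin_coeff k = fact (2*k) / (2^(2*k) * (fact k)^2)"

definition arcsin_term :: "nat \<Rightarrow> real \<Rightarrow> real" where
  "arcsin_term k x = arcsin_coeff k * x^(2*k+1) / (2*k+1)"

lemma arcsin_coeff_nonneg: "0 \<le> arcsin_coeff k"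
  by (simp add: arcsin_coeff_def)

lemma arcsin_coeff_Suc: "arcsin_coeff (Suc k) = arcsin_coeff k * (2*real k+1) / (2*real k+2)"
proof -
  have cancel: "x * b * c / (d * c^2) = x / d * b / c" for x b c d :: real
    by (cases "c = 0") (simp_all add: power2_eq_square)
  have "fact (2 * Suc k) = fact (2*k) * (2*real k+1) * (2*real k+2)"
    by (simp add: algebra_simps)
  moreover have "2^(2*Suc k) * fact (Suc k)^2 = 2^(2*k) * fact k^2 * (2*real k+2)^2"
    by (simp add: power2_eq_square algebra_simps)
  ultimately show ?thesis
    unfolding arcsin_coeff_def by (simp only: cancel)
qed

lemma gbinomial_Suc_eq:
  "(a :: 'a :: field_char_0) gchoose Suc k = (a gchoose k) * (a - of_nat k) / (of_nat k + 1)"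
  by (simp add: gbinomial_prod_rev atLeastLessThanSuc_atLeastAtMost[symmetric]
      prod.atLeast0_lessThan_Suc algebra_simps)

lemma arcsin_coeff_eq_gbinomial: "arcsin_coeff k = (-1)^k * ((-1/2) gchoose k)"
proof (induction k)
  case 0
  then show ?case by (simp add: arcsin_coeff_def)
next
  case (Suc k)
  show ?case
    unfolding arcsin_coeff_Suc Suc.IH gbinomial_Suc_eq by (simp add: field_simps)
qed

lemma arcsin_coeff_square_le: "arcsin_coeff k ^ 2 \<le> 1 / (2*real k+1)"
proof (induction k)
  case 0
  then show ?case by (simp add: arcsin_coeff_def)
next
  case (Suc k)
  have "arcsin_coeff (Suc k) ^ 2 = arcsin_coeff k ^ 2 * ((2*real k+1) / (2*real k+2))^2"
    by (simp add: arcsin_coeff_Suc power_mult_distrib power_divide)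
  also have "\<dots> \<le> 1 / (2*real k+1) * ((2*real k+1) / (2*real k+2))^2"
    by (rule mult_right_mono[OF Suc.IH]) simp
  also have "\<dots> = (2*real k+1) / (2*real k+2)^2"
    by (simp add: power2_eq_square)
  also have "\<dots> \<le> 1 / (2 * real (Suc k) + 1)"
  proof -
    have "(2*real k+1) * (2 * real (Suc k) + 1) \<le> (2*real k+2)^2"
      by (simp add: power2_eq_square algebra_simps)
    then show ?thesis by (simp add: divide_simps)
  qed
  finally show ?case .
qed

text \<open>At \<open>x = \<plusminus>1\<close> the differentiated series diverges; this bound gives uniform convergence
  on \<open>[-1,1]\<close>, so that the identity extends to the endpoints by continuity.\<close>
lemma arcsin_term_one_le: "arcsin_term k 1 \<le> real (Suc k) powr (-3/2)"
proof -
  have "arcsin_coeff k ^ 2 \<le> 1 / (real k + 1)"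
    using arcsin_coeff_square_le[of k] by (rule order_trans) (simp add: frac_le)
  then have "arcsin_coeff k \<le> sqrt (1 / (real k + 1))"
    by (rule real_le_rsqrt)
  then have "arcsin_term k 1 \<le> sqrt (1 / (real k + 1)) / (real k + 1)"
    using arcsin_coeff_nonneg[of k] by (auto simp: arcsin_term_def intro!: frac_le)
  also have "\<dots> = 1 / (real (Suc k) * sqrt (real (Suc k)))"
    by (simp add: real_sqrt_divide ac_simps)
  also have "\<dots> = real (Suc k) powr (-3/2)"
    using powr_add[of "real (Suc k)" 1 "1/2"]
    by (simp add: powr_minus_divide powr_half_sqrt[symmetric] del: of_nat_Suc)
  finally show ?thesis .
qed

lemma summable_arcsin_term_one: "summable (\<lambda>k. arcsin_term k 1)"
proof (rule summable_comparison_test'[of "\<lambda>k. real (Suc k) powr (-3/2)"])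
  show "summable (\<lambda>k. real (Suc k) powr (-3/2))"
    using summable_real_powr_iff[of "-3/2"] summable_Suc_iff[of "\<lambda>n. real n powr (-3/2)"]
    by simp
  show "norm (arcsin_term k 1) \<le> real (Suc k) powr (-3/2)" for k
    using arcsin_term_one_le[of k] arcsin_coeff_nonneg[of k] by (simp add: arcsin_term_def)
qed

lemma norm_arcsin_term_le:
  assumes "\<bar>x\<bar> \<le> 1"
  shows "norm (arcsin_term k x) \<le> arcsin_term k 1"
proof -
  have "norm (arcsin_term k x) = arcsin_coeff k * \<bar>x\<bar>^(2*k+1) / (2*k+1)"
    by (simp add: arcsin_term_def abs_mult power_abs arcsin_coeff_nonneg)
  also have "\<dots> \<le> arcsin_term k 1"
    unfolding arcsin_term_def using assms
    by (intro divide_right_mono mult_left_mono)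
      (auto simp: arcsin_coeff_nonneg intro!: power_le_one simp del: power_Suc)
  finally show ?thesis .
qed

lemma inverse_sqrt_one_minus_square_sums:
  assumes "\<bar>x\<bar> < 1"
  shows "(\<lambda>k. arcsin_coeff k * x^(2*k)) sums inverse (sqrt (1 - x^2))"
proof -
  have x: "\<bar>-(x^2)\<bar> < 1" using assms by (simp add: abs_square_less_1)
  then have "(\<lambda>k. ((-1/2) gchoose k) * (-(x^2))^k) sums (1 + -(x^2)) powr (-1/2)"
    by (rule gen_binomial_real)
  moreover have "((-1/2) gchoose k) * (-(x^2))^k = arcsin_coeff k * x^(2*k)" for k
    unfolding arcsin_coeff_eq_gbinomial power_minus[of "x^2"] power_mult by (simp only: mult_ac)
  moreover have "(1 + -(x^2)) powr (-1/2) = inverse (sqrt (1 - x^2))"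
    using x powr_minus[of "1 - x^2" "1/2"] by (simp add: powr_half_sqrt)
  ultimately show ?thesis by simp
qed

lemma has_field_derivative_arcsin_series:
  assumes "\<bar>x\<bar> < 1"
  shows "((\<lambda>x. \<Sum>k. arcsin_term k x) has_field_derivative inverse (sqrt (1 - x^2))) (at x)"
proof -
  define r where "r = (\<bar>x\<bar> + 1) / 2"
  have r: "\<bar>x\<bar> < r" "r < 1" using assms by (auto simp: r_def)
  have deriv: "(arcsin_term k has_field_derivative arcsin_coeff k * y^(2*k)) (at y within {-r..r})"
    for k y
    unfolding arcsin_term_def by (auto intro!: derivative_eq_intros simp del: power_Suc)
  have "uniformly_convergent_on {-r..r} (\<lambda>n y. \<Sum>k<n. arcsin_coeff k * y^(2*k))"
  proof (rule Weierstrass_m_test'[where M = "\<lambda>k. arcsin_coeff k * r^(2*k)"])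
    show "norm (arcsin_coeff k * y^(2*k)) \<le> arcsin_coeff k * r^(2*k)" if "y \<in> {-r..r}" for k y
      using that by (auto simp: abs_mult power_abs arcsin_coeff_nonneg intro!: mult_left_mono power_mono)
    show "summable (\<lambda>k. arcsin_coeff k * r^(2*k))"
      using inverse_sqrt_one_minus_square_sums[of r] r by (auto simp: sums_iff)
  qed
  from has_field_derivative_series'(2)[OF convex_real_interval(5) deriv this, of 0] r
  have "((\<lambda>x. \<Sum>k. arcsin_term k x) has_field_derivative (\<Sum>k. arcsin_coeff k * x^(2*k))) (at x)"
    by (auto simp: arcsin_term_def abs_less_iff)
  then show ?thesis
    using inverse_sqrt_one_minus_square_sums[OF assms] by (simp add: sums_iff)
qed

lemma arcsin_series_open:
  assumes "\<bar>x\<bar> < 1"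
  shows "(\<Sum>k. arcsin_term k x) = arcsin x"
proof -
  let ?g = "\<lambda>x. (\<Sum>k. arcsin_term k x) - arcsin x"
  have "(?g has_field_derivative 0) (at y within {-1<..<1})" if "y \<in> {-1<..<1}" for y
  proof -
    have "(?g has_field_derivative inverse (sqrt (1 - y^2)) - inverse (sqrt (1 - y^2))) (at y)"
      using that by (intro DERIV_diff has_field_derivative_arcsin_series DERIV_arcsin) auto
    then show ?thesis by (simp add: has_field_derivative_at_within)
  qed
  from has_field_derivative_zero_constant[OF convex_real_interval(8) this]
  obtain c where c: "\<forall>y\<in>{-1<..<1}. ?g y = c" by blast
  have "?g x = ?g 0"
    using c[rule_format, of x] c[rule_format, of 0] assms by (simp add: abs_less_iff)
  also have "?g 0 = 0" by (simp add: arcsin_term_def)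
  finally show ?thesis by simp
qed

lemma arcsin_series:
  assumes "\<bar>x\<bar> \<le> 1"
  shows "(\<lambda>k. arcsin_term k x) sums arcsin x"
proof -
  have lim: "uniform_limit {-1..1} (\<lambda>n x. \<Sum>k<n. arcsin_term k x) (\<lambda>x. \<Sum>k. arcsin_term k x)
      sequentially"
    by (rule Weierstrass_m_test[OF _ summable_arcsin_term_one], rule norm_arcsin_term_le) auto
  have "continuous_on {-1..1} (\<lambda>x. \<Sum>k. arcsin_term k x)"
    by (rule uniform_limit_theorem[OF always_eventually lim])
      (auto simp: arcsin_term_def intro!: continuous_intros)
  then have "continuous_on {-1..1} (\<lambda>x. (\<Sum>k. arcsin_term k x) - arcsin x)"
    by (intro continuous_intros continuous_on_arcsin')
  then have "closed {x\<in>{-1..1}. (\<Sum>k. arcsin_term k x) - arcsin x = 0}"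
    by (rule continuous_closed_preimage_constant) simp
  moreover have "{-1<..<1} \<subseteq> {x\<in>{-1..1}. (\<Sum>k. arcsin_term k x) - arcsin x = 0}"
    using arcsin_series_open by auto
  ultimately have "closure {-1<..<1} \<subseteq> {x\<in>{-1..1}. (\<Sum>k. arcsin_term k x) - arcsin x = 0}"
    by (rule closure_minimal[rotated])
  moreover have "x \<in> closure {-1<..<(1::real)}" using assms by auto
  moreover have "summable (\<lambda>k. arcsin_term k x)"
    by (rule summable_comparison_test'[OF summable_arcsin_term_one norm_arcsin_term_le[OF assms]])
  ultimately show ?thesis by (auto simp: sums_iff)
qed

section \<open>Permutation symmetry of \<open>\<C>(s)\<close>\<close>

lemma inj_image_image: "inj f \<Longrightarrow> inj ((`) f)"
  by (rule injI) (simp add: inj_image_eq_iff)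

lemma image_in_upairs:
  assumes "\<sigma> permutes {1..n}" and "p \<in> upairs n"
  shows "\<sigma> ` p \<in> upairs n"
proof -
  obtain i j where ij: "i \<in> {1..n}" "j \<in> {1..n}" "i \<noteq> j" "p = {i, j}"
    using assms(2) unfolding upairs_def by blast
  then have "\<sigma> i \<in> {1..n}" "\<sigma> j \<in> {1..n}" "\<sigma> i \<noteq> \<sigma> j"
    using permutes_in_image[OF assms(1)] permutes_inj[OF assms(1)] by (auto dest: injD)
  then show ?thesis
    unfolding upairs_def using ij(4) by auto
qed

lemma bij_betw_image_upairs:
  assumes "\<sigma> permutes {1..n}"
  shows "bij_betw ((`) \<sigma>) (upairs n) (upairs n)"
proof (rule bij_betwI[where g = "(`) (inv \<sigma>)"])
  show "(`) \<sigma> \<in> upairs n \<rightarrow> upairs n" "(`) (inv \<sigma>) \<in> upairs n \<rightarrow> upairs n"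
    using assms permutes_inv[OF assms] by (auto intro: image_in_upairs)
  show "inv \<sigma> ` \<sigma> ` p = p" for p
    using permutes_inj[OF assms] by (rule image_inv_f_f)
  show "\<sigma> ` inv \<sigma> ` p = p" for p
    using permutes_surj[OF assms] by (rule image_f_inv_f)
qed

lemma upairs_transitive:
  assumes "p \<in> upairs n" and "q \<in> upairs n"
  obtains \<sigma> where "\<sigma> permutes {1..n}" and "\<sigma> ` p = q"
proof -
  obtain i j where ij: "i \<in> {1..n}" "j \<in> {1..n}" "i \<noteq> j" "p = {i, j}"
    using assms(1) unfolding upairs_def by blast
  obtain k l where kl: "k \<in> {1..n}" "l \<in> {1..n}" "k \<noteq> l" "q = {k, l}"
    using assms(2) unfolding upairs_def by blast
  define j' where "j' = Transposition.transpose i k j"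
  have j': "j' \<in> {1..n}" "j' \<noteq> k"
    using ij kl by (auto simp: j'_def Transposition.transpose_def)
  have \<sigma>: "Transposition.transpose j' l \<circ> Transposition.transpose i k permutes {1..n}"
    using ij kl j' by (intro permutes_compose permutes_swap_id) auto
  have "Transposition.transpose i k ` p = {k, j'}"
    unfolding ij(4) j'_def by simp
  then have "(Transposition.transpose j' l \<circ> Transposition.transpose i k) ` p = q"
    unfolding image_comp[symmetric] kl(4) using j' kl by (auto simp: Transposition.transpose_def)
  with \<sigma> show thesis by (rule that)
qed

definition permute_clustering :: "(nat \<Rightarrow> nat) \<Rightarrow> nat set set \<Rightarrow> nat set set" where
  "permute_clustering \<sigma> B = (`) \<sigma> ` B"

lemma card_permute_clustering: "inj \<sigma> \<Longrightarrow> card (permute_clustering \<sigma> B) = card B"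
  unfolding permute_clustering_def
  by (rule card_image) (rule inj_on_subset[OF inj_image_image], simp_all)

lemma permute_clustering_in_clusterings_sizes:
  assumes "\<sigma> permutes {1..n}" and "B \<in> clusterings_sizes n s"
  shows "permute_clustering \<sigma> B \<in> clusterings_sizes n s"
proof -
  have inj: "inj \<sigma>" using assms(1) by (rule permutes_inj)
  have part: "partition_on {1..n} B"
    using assms(2) by (simp add: clusterings_sizes_def clustering_def)
  then have "partition_on (\<sigma> ` {1..n}) ((`) \<sigma> ` B - {{}})"
    using inj by (intro partition_on_inj_image) (auto intro: inj_on_subset)
  moreover have "{} \<notin> (`) \<sigma> ` B"
    using part by (auto simp: partition_on_def)
  moreover have "\<sigma> ` {1..n} = {1..n}"
    using assms(1) by (rule permutes_image)
  ultimately have "clustering n (permute_clustering \<sigma> B)"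
    by (simp add: clustering_def permute_clustering_def)
  moreover have "mset_set (permute_clustering \<sigma> B) = image_mset ((`) \<sigma>) (mset_set B)"
    unfolding permute_clustering_def
    by (rule image_mset_mset_set[symmetric]) (rule inj_on_subset[OF inj_image_image[OF inj]], simp)
  then have "image_mset card (mset_set (permute_clustering \<sigma> B)) = image_mset card (mset_set B)"
    by (simp add: multiset.map_comp o_def card_image[OF inj_on_subset[OF inj]])
  ultimately show ?thesis
    using assms(2) by (simp add: clusterings_sizes_def)
qed

lemma bij_betw_permute_clustering:
  assumes "\<sigma> permutes {1..n}"
  shows "bij_betw (permute_clustering \<sigma>) (clusterings_sizes n s) (clusterings_sizes n s)"
proof (rule bij_betwI[where g = "permute_clustering (inv \<sigma>)"])
  show "permute_clustering \<sigma> \<in> clusterings_sizes n s \<rightarrow> clusterings_sizes n s"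
    "permute_clustering (inv \<sigma>) \<in> clusterings_sizes n s \<rightarrow> clusterings_sizes n s"
    using assms permutes_inv[OF assms] by (auto intro: permute_clustering_in_clusterings_sizes)
  show "permute_clustering (inv \<sigma>) (permute_clustering \<sigma> B) = B" for B
    by (simp add: permute_clustering_def image_image permutes_inverses[OF assms])
  show "permute_clustering \<sigma> (permute_clustering (inv \<sigma>) B) = B" for B
    by (simp add: permute_clustering_def image_image permutes_inverses[OF assms])
qed

lemma cvec_permute_clustering:
  assumes "inj \<sigma>"
  shows "cvec (permute_clustering \<sigma> B) (\<sigma> ` p) = cvec B p"
  using inj_image_subset_iff[OF assms] by (auto simp: cvec_def permute_clustering_def)

lemma sum_upairs_permute:
  assumes "\<sigma> permutes {1..n}"
  shows "(\<Sum>p\<in>upairs n. g (\<sigma> ` p)) = (\<Sum>p\<in>upairs n. g p)"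
  using sum.reindex_bij_betw[OF bij_betw_image_upairs[OF assms]] .

lemma mA_permute_clustering:
  assumes "\<sigma> permutes {1..n}"
  shows "mA n (permute_clustering \<sigma> B) = mA n B"
  unfolding mA_def
  by (subst sum_upairs_permute[OF assms, symmetric])
    (simp add: cvec_permute_clustering[OF permutes_inj[OF assms]])

lemma uvec_permute_clustering:
  assumes "\<sigma> permutes {1..n}"
  shows "uvec n (permute_clustering \<sigma> B) (\<sigma> ` p) = uvec n B p"
proof -
  have inj: "inj \<sigma>" using assms by (rule permutes_inj)
  have "(\<Sum>q\<in>upairs n. (cvec (permute_clustering \<sigma> B) q - mA n (permute_clustering \<sigma> B) / NN n)^2)
      = (\<Sum>q\<in>upairs n. (cvec B q - mA n B / NN n)^2)"
    by (subst sum_upairs_permute[OF assms, symmetric])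
      (simp add: cvec_permute_clustering[OF inj] mA_permute_clustering[OF assms])
  then show ?thesis
    unfolding uvec_def
    by (simp add: card_permute_clustering[OF inj] cvec_permute_clustering[OF inj]
        mA_permute_clustering[OF assms])
qed

lemma sum_uvec_upairs_eq:
  assumes "p \<in> upairs n" and "q \<in> upairs n"
  shows "(\<Sum>B\<in>clusterings_sizes n s. uvec n B p) = (\<Sum>B\<in>clusterings_sizes n s. uvec n B q)"
proof -
  obtain \<sigma> where \<sigma>: "\<sigma> permutes {1..n}" "\<sigma> ` p = q"
    using assms by (rule upairs_transitive)
  have "(\<Sum>B\<in>clusterings_sizes n s. uvec n B q)
      = (\<Sum>B\<in>clusterings_sizes n s. uvec n (permute_clustering \<sigma> B) (\<sigma> ` p))"
    unfolding \<sigma>(2) by (rule sum.reindex_bij_betw[OF bij_betw_permute_clustering[OF \<sigma>(1)], symmetric])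
  also have "\<dots> = (\<Sum>B\<in>clusterings_sizes n s. uvec n B p)"
    by (simp add: uvec_permute_clustering[OF \<sigma>(1)])
  finally show ?thesis ..
qed

section \<open>The correlation coefficient\<close>

lemma finite_upairs: "finite (upairs n)"
  by (rule finite_subset[of _ "Pow {1..n}"]) (auto simp: upairs_def)

lemma finite_clusterings_sizes: "finite (clusterings_sizes n s)"
proof (rule finite_subset)
  show "clusterings_sizes n s \<subseteq> {P. partition_on {1..n} P}"
    by (auto simp: clusterings_sizes_def clustering_def)
  show "finite {P. partition_on {1..n} P}"
    by (rule finitely_many_partition_on) simp
qed

text \<open>Blocks of consecutive integers, one block per element of \<open>s\<close>.\<close>
lemma clustering_with_sizes_exists:
  assumes "\<forall>x\<in>#s. 0 < x"
  shows "\<exists>B. clustering (sum_mset s) B \<and> image_mset card (mset_set B) = s"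
  using assms
proof (induction s)
  case empty
  show ?case
    by (rule exI[of _ "{}"]) (simp add: clustering_def partition_on_empty)
next
  case (add x s)
  then obtain B where B: "clustering (sum_mset s) B" "image_mset card (mset_set B) = s"
    by auto
  define m where "m = sum_mset s"
  define C where "C = {m+1..m+x}"
  have part: "partition_on {1..m} B"
    using B(1) by (simp add: clustering_def m_def)
  then have disj: "disjnt C (\<Union>B)"
    by (auto simp: C_def disjnt_def partition_on_def)
  have "C \<noteq> {}"
    using add.prems by (simp add: C_def)
  have "{1..m+x} - C = {1..m}"
    by (auto simp: C_def)
  then have "partition_on {1..m+x} (insert C B)"
    using partition_on_insert[OF disj] part \<open>C \<noteq> {}\<close> by (auto simp: C_def)
  moreover have "C \<notin> B"
    using disj \<open>C \<noteq> {}\<close> by (auto simp: disjnt_def)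
  moreover have "finite B"
    using finite_elements[OF _ part] by simp
  ultimately show ?case
    using B(2) by (intro exI[of _ "insert C B"]) (simp add: clustering_def m_def C_def add.commute)
qed

lemma clusterings_sizes_nonempty:
  assumes "\<forall>x\<in>#s. 0 < x" and "sum_mset s = n"
  shows "clusterings_sizes n s \<noteq> {}"
  using clustering_with_sizes_exists[OF assms(1)] assms(2) by (auto simp: clusterings_sizes_def)

lemma sum_uvec_square_le: "(\<Sum>p\<in>upairs n. uvec n B p ^ 2) \<le> 1"
proof -
  have const: "(\<Sum>p\<in>upairs n. (c / sqrt (NN n))^2) \<le> 1" if "c^2 = 1" for c :: real
    using that by (cases "NN n = 0") (simp_all add: NN_def power_divide)
  consider "card B = 1" | "card B \<noteq> 1" "card B = n" | "card B \<noteq> 1" "card B \<noteq> n"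
    by blast
  then show ?thesis
  proof cases
    case 1
    then show ?thesis
      unfolding uvec_def using const[of 1] by simp
  next
    case 2
    then show ?thesis
      unfolding uvec_def using const[of "-1"] by simp
  next
    case 3
    define S where "S = (\<Sum>q\<in>upairs n. (cvec B q - mA n B / NN n)^2)"
    have "S \<ge> 0" unfolding S_def by (intro sum_nonneg) simp
    have "(\<Sum>p\<in>upairs n. uvec n B p ^ 2) = (\<Sum>p\<in>upairs n. (cvec B p - mA n B / NN n)^2 / S)"
      unfolding uvec_def using 3 \<open>S \<ge> 0\<close> by (simp add: S_def[symmetric] power_divide)
    also have "\<dots> = S / S"
      unfolding sum_divide_distrib[symmetric] S_def ..
    finally show ?thesis by simp
  qed
qed

lemma abs_CC_le_1: "\<bar>CC n A B\<bar> \<le> 1"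
proof -
  have "CC n A B ^ 2 \<le> (\<Sum>p\<in>upairs n. uvec n A p ^ 2) * (\<Sum>p\<in>upairs n. uvec n B p ^ 2)"
    unfolding CC_def by (rule Cauchy_Schwarz_ineq_sum)
  also have "\<dots> \<le> 1 * 1"
    by (intro mult_mono sum_uvec_square_le) (auto intro: sum_nonneg)
  finally show ?thesis by (simp add: abs_square_le_1)
qed

lemma sum_uvec_eq_0:
  assumes "card A \<noteq> 1" and "card A \<noteq> n"
  shows "(\<Sum>p\<in>upairs n. uvec n A p) = 0"
proof (cases "NN n = 0")
  case True
  then show ?thesis
    using finite_upairs by (simp add: NN_def)
next
  case False
  have "(\<Sum>p\<in>upairs n. cvec A p - mA n A / NN n) = 0"
    using False by (simp add: sum_subtractf mA_def NN_def)
  then show ?thesis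
    unfolding uvec_def using assms by (simp add: sum_divide_distrib[symmetric])
qed

lemma sum_CC_eq_0:
  assumes "card A \<noteq> 1" and "card A \<noteq> n"
  shows "(\<Sum>B\<in>clusterings_sizes n s. CC n A B) = 0"
proof (cases "upairs n = {}")
  case True
  then show ?thesis by (simp add: CC_def)
next
  case False
  then obtain p\<^sub>0 where p\<^sub>0: "p\<^sub>0 \<in> upairs n" by blast
  define K where "K = (\<Sum>B\<in>clusterings_sizes n s. uvec n B p\<^sub>0)"
  have "(\<Sum>B\<in>clusterings_sizes n s. CC n A B)
      = (\<Sum>p\<in>upairs n. uvec n A p * (\<Sum>B\<in>clusterings_sizes n s. uvec n B p))"
    unfolding CC_def by (simp add: sum_distrib_left sum.swap[of _ "clusterings_sizes n s"])
  also have "\<dots> = (\<Sum>p\<in>upairs n. uvec n A p) * K"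
    unfolding K_def sum_distrib_right using sum_uvec_upairs_eq[OF _ p\<^sub>0] by simp
  also have "\<dots> = 0"
    using sum_uvec_eq_0[OF assms] by simp
  finally show ?thesis .
qed

lemma sums_expectation_finite_pmf:
  fixes f :: "nat \<Rightarrow> 'a \<Rightarrow> real"
  assumes "finite (set_pmf P)" and "\<And>x. x \<in> set_pmf P \<Longrightarrow> (\<lambda>k. f k x) sums g x"
  shows "(\<lambda>k. measure_pmf.expectation P (f k)) sums measure_pmf.expectation P g"
proof -
  have "(\<lambda>k. \<Sum>x\<in>set_pmf P. f k x * pmf P x) sums (\<Sum>x\<in>set_pmf P. g x * pmf P x)"
    using assms(2) by (intro sums_sum sums_mult2)
  then show ?thesis
    by (simp add: integral_measure_pmf_real[OF assms(1)])
qed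

lemma CD_eq_arcsin: "CD n A B = 1/2 - arcsin (CC n A B) / pi"
  using abs_CC_le_1[of n A B] by (simp add: CD_def arccos_arcsin_eq abs_le_iff diff_divide_distrib)

theorem mainTheorem7:
  fixes n :: nat and A :: "nat set set" and s :: "nat multiset"
  assumes "clustering n A" and "1 < card A" and "card A < n"
    and "\<forall>x\<in>#s. 0 < x" and "sum_mset s = n"
  defines "c \<equiv> (\<lambda>k::nat. fact (2*k) / (2^(2*k) * (fact k)^2) *
             measure_pmf.expectation (Cdist n s) (\<lambda>B. CC n A B ^ (2*k+1)) / real (2*k+1) :: real)"
  shows "summable (\<lambda>k. c (Suc k)) \<and>
    measure_pmf.expectation (Cdist n s) (\<lambda>B. CD n A B) - 1/2 = - (1/pi) * (\<Sum>k. c (Suc k))"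
proof -
  let ?E = "measure_pmf.expectation (Cdist n s)"
  have nonempty: "clusterings_sizes n s \<noteq> {}"
    using assms(4,5) by (rule clusterings_sizes_nonempty)
  then have fin: "finite (set_pmf (Cdist n s))"
    by (simp add: Cdist_def finite_clusterings_sizes)
  have "c = (\<lambda>k. ?E (\<lambda>B. arcsin_term k (CC n A B)))"
    by (simp add: c_def arcsin_term_def arcsin_coeff_def)
  then have "c sums ?E (\<lambda>B. arcsin (CC n A B))"
    using sums_expectation_finite_pmf[OF fin arcsin_series[OF abs_CC_le_1]] by simp
  moreover have "c 0 = 0"
    using sum_CC_eq_0[of A n s] assms(2,3)
    by (simp add: c_def Cdist_def integral_pmf_of_set[OF nonempty finite_clusterings_sizes])
  ultimately have "(\<lambda>k. c (Suc k)) sums ?E (\<lambda>B. arcsin (CC n A B))"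
    by (simp add: sums_Suc_iff)
  moreover have "?E (CD n A) = 1/2 - ?E (\<lambda>B. arcsin (CC n A B)) / pi"
    unfolding CD_eq_arcsin
    by (simp add: Bochner_Integration.integral_diff[OF integrable_measure_pmf_finite[OF fin]
          integrable_measure_pmf_finite[OF fin]])
  ultimately show ?thesis
    by (simp add: sums_iff)
qed

end
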